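(* Let $N,Q,S\ge 1$ be integers, let $\mathbf{H}\in\mathbb{R}^{Q\times N}$ with $\mathbf{H}\neq\mathbf{0}$, $\mathbf{y}\in\mathbb{R}^Q$, let $\mathbf{V}_0$ be a real matrix with $N$ columns, and for each $s\in\{1,\dots,S\}$ let $P_s\ge1$, $\mathbf{V}_s\in\mathbb{R}^{P_s\times N}$ and $\mathbf{c}_s\in\mathbb{R}^{P_s}$. Let $\Phi:\mathbb{R}^Q\to\mathbb{R}$ and, for every $\delta>0$ and $s\in\{1,\dots,S\}$, $\psi_{s,\delta}:\mathbb{R}\to\mathbb{R}$. For $\delta>0$ define $$F_\delta(\mathbf{x})=\Phi(\mathbf{H}\mathbf{x}-\mathbf{y})+\sum_{s=1}^S\psi_{s,\delta}(\|\mathbf{V}_s\mathbf{x}-\mathbf{c}_s\|)+\|\mathbf{V}_0\mathbf{x}\|^2,\qquad \mathbf{x}\in\mathbb{R}^N.$$ Assume: (a) $\Phi$ is continuous and coercive; (b) for every $\delta>0$ and $s$, $\psi_{s,\delta}$ is continuous and nonnegative; (c) $\operatorname{Ker}\mathbf{H}\cap\operatorname{Ker}\mathbf{V}_0=\{\mathbf{0}\}$; (d) for every $s$ and all $0<\delta_1\le\delta_2$, $\psi_{s,\delta_1}(t)\ge\psi_{s,\delta_2}(t)$ for all $t\in\mathbb{R}$; (e) there exists $\lambda>0$ such that for every $s$ and every $t\in\mathbb{R}$, $\lim_{\delta\to0,\,\delta>0}\psi_{s,\delta}(t)=\lambda\chi_{\mathbb{R}\setminus\{0\}}(t)$, where $\chi_{\mathbb{R}\setminus\{0\}}(t)=0$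 if $t=0$ and $1$ otherwise. Define $$F_0(\mathbf{x})=\Phi(\mathbf{H}\mathbf{x}-\mathbf{y})+\lambda\,\ell_0(\mathbf{V}\mathbf{x}-\mathbf{c})+\|\mathbf{V}_0\mathbf{x}\|^2,$$ where $\mathbf{V}=[\mathbf{V}_1^\top|\cdots|\mathbf{V}_S^\top]^\top$, $\mathbf{c}=[\mathbf{c}_1^\top,\dots,\mathbf{c}_S^\top]^\top$, and for $\mathbf{t}=[\mathbf{t}_1^\top,\dots,\mathbf{t}_S^\top]^\top$ with $\mathbf{t}_s\in\mathbb{R}^{P_s}$, $\ell_0(\mathbf{t})=\sum_{s=1}^S\chi_{\mathbb{R}\setminus\{0\}}(\|\mathbf{t}_s\|)$. Let $(\delta_n)_{n\in\mathbb{N}}$ be a decreasing sequence of positive reals converging to $0$. Then: (i) $\inf F_{\delta_n}\to\inf F_0$ as $n\to+\infty$; (ii) if for every $n$, $\hat{\mathbf{x}}_n$ is a minimizer of $F_{\delta_n}$, then $(\hat{\mathbf{x}}_n)_{n\in\mathbb{N}}$ is bounded and all its cluster points are minimizers of $F_0$; (iii) if $F_0$ has a unique minimizer $\tilde{\mathbf{x}}$, then $\hat{\mathbf{x}}_n\to\tilde{\mathbf{x}}$ as $n\to+\infty$.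
   Context: $\|\cdot\|$ denotes the Euclidean norm. *)

theory Defs
  imports "HOL-Analysis.Analysis"
begin

definition chi_nz :: "real \<Rightarrow> real" where
  "chi_nz t = (if t = 0 then 0 else 1)"

text \<open>Block vectors: t s i is the i-th entry (i < P s) of block t_s; Euclidean norm of block s.\<close>
definition block_norm :: "(nat \<Rightarrow> nat) \<Rightarrow> (nat \<Rightarrow> nat \<Rightarrow> real) \<Rightarrow> nat \<Rightarrow> real" where
  "block_norm P t s = sqrt (\<Sum>i<P s. (t s i)\<^sup>2)"

definition ell0 :: "nat \<Rightarrow> (nat \<Rightarrow> nat) \<Rightarrow> (nat \<Rightarrow> nat \<Rightarrow> real) \<Rightarrow> real" where
  "ell0 S P t = (\<Sum>s=1..S. chi_nz (block_norm P t s))"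

text \<open>Block matrix-vector residual V x - c, where V s is a (P s) x N matrix given by entries
  V s i j (i < P s, j the column index) and c s i the entries of c_s.\<close>
definition block_res :: "(nat \<Rightarrow> nat \<Rightarrow> 'n::finite \<Rightarrow> real) \<Rightarrow> (nat \<Rightarrow> nat \<Rightarrow> real)
    \<Rightarrow> real^'n \<Rightarrow> nat \<Rightarrow> nat \<Rightarrow> real" where
  "block_res V c x = (\<lambda>s i. (\<Sum>j\<in>UNIV. V s i j * x $ j) - c s i)"

definition coercive :: "('a::real_normed_vector \<Rightarrow> real) \<Rightarrow> bool" where
  "coercive f \<longleftrightarrow> filterlim f at_top at_infinity"

definition is_minimizer :: "('a \<Rightarrow> real) \<Rightarrow> 'a \<Rightarrow> bool" where
  "is_minimizer f x \<longleftrightarrow> (\<forall>z. f x \<le> f z)"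

definition F_delta :: "(real^'q \<Rightarrow> real) \<Rightarrow> real^'n^'q \<Rightarrow> real^'q \<Rightarrow> real^'n^'m
    \<Rightarrow> nat \<Rightarrow> (nat \<Rightarrow> nat) \<Rightarrow> (nat \<Rightarrow> nat \<Rightarrow> 'n::finite \<Rightarrow> real) \<Rightarrow> (nat \<Rightarrow> nat \<Rightarrow> real)
    \<Rightarrow> (nat \<Rightarrow> real \<Rightarrow> real \<Rightarrow> real) \<Rightarrow> real \<Rightarrow> real^'n \<Rightarrow> real" where
  "F_delta Phi H y V0 S P V c psi \<delta> x =
     Phi (H *v x - y) + (\<Sum>s=1..S. psi s \<delta> (block_norm P (block_res V c x) s)) + (norm (V0 *v x))\<^sup>2"

definition F_zero :: "(real^'q \<Rightarrow> real) \<Rightarrow> real^'n^'q \<Rightarrow> real^'q \<Rightarrow> real^'n^'m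
    \<Rightarrow> nat \<Rightarrow> (nat \<Rightarrow> nat) \<Rightarrow> (nat \<Rightarrow> nat \<Rightarrow> 'n::finite \<Rightarrow> real) \<Rightarrow> (nat \<Rightarrow> nat \<Rightarrow> real)
    \<Rightarrow> real \<Rightarrow> real^'n \<Rightarrow> real" where
  "F_zero Phi H y V0 S P V c lam x =
     Phi (H *v x - y) + lam * ell0 S P (block_res V c x) + (norm (V0 *v x))\<^sup>2"

end

theory Submission imports Defs begin

text \<open>
  The functions \<open>F\<^sub>\<delta>\<close> increase pointwise to \<open>F\<^sub>0\<close> as \<open>\<delta>\<close> decreases to \<open>0\<close>, and all of them
  dominate the coercive function \<open>G x = \<Phi>(Hx - y) + \<parallel>V\<^sub>0x\<parallel>\<^sup>2\<close>. Hence \<open>inf F\<^sub>\<delta>\<^sub>n\<close> increases to some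
  \<open>L \<le> inf F\<^sub>0\<close>, and (near-)minimizers of \<open>F\<^sub>\<delta>\<^sub>n\<close> stay in a sublevel set of \<open>G\<close>, which is bounded.
  If \<open>z\<close> is a cluster point of such minimizers, then for fixed \<open>k\<close> and all large \<open>n\<close> along the
  subsequence, \<open>F\<^sub>\<delta>\<^sub>k(x\<^sub>n) \<le> F\<^sub>\<delta>\<^sub>n(x\<^sub>n) \<le> L\<close>; continuity of \<open>F\<^sub>\<delta>\<^sub>k\<close> gives \<open>F\<^sub>\<delta>\<^sub>k(z) \<le> L\<close>, and letting
  \<open>k \<rightarrow> \<infinity>\<close> gives \<open>F\<^sub>0(z) \<le> L\<close>. This forces \<open>L = inf F\<^sub>0\<close> and makes \<open>z\<close> a minimizer of \<open>F\<^sub>0\<close>.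
\<close>

lemma LIMSEQ_unique_cluster_point:
  fixes x :: "nat \<Rightarrow> 'a::heine_borel"
  assumes bounded: "bounded (range x)"
    and cluster: "\<And>z r. strict_mono r \<Longrightarrow> (x \<circ> r) \<longlonglongrightarrow> z \<Longrightarrow> z = a"
  shows "x \<longlonglongrightarrow> a"
proof (rule ccontr)
  assume "\<not> x \<longlonglongrightarrow> a"
  then obtain e where e: "e > 0" "\<not> eventually (\<lambda>n. dist (x n) a < e) sequentially"
    unfolding tendsto_iff by blast
  hence "infinite {n. \<not> dist (x n) a < e}"
    by (simp add: cofinite_eq_sequentially[symmetric] eventually_cofinite)
  then obtain r :: "nat \<Rightarrow> nat" where r: "strict_mono r" "\<And>n. \<not> dist (x (r n)) a < e"
    using infinite_enumerate by blast
  have "bounded (range (x \<circ> r))" using bounded by (rule bounded_subset) auto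
  then obtain l r' where r': "strict_mono r'" "((x \<circ> r) \<circ> r') \<longlonglongrightarrow> l"
    using bounded_imp_convergent_subsequence by blast
  have "l = a" using cluster[of "r \<circ> r'" l] r' r(1) by (simp add: strict_mono_o o_assoc)
  with r' e(1) have "eventually (\<lambda>n. dist (x (r (r' n))) a < e) sequentially"
    by (auto simp: tendsto_iff)
  with r(2) show False by (simp add: eventually_sequentially)
qed

lemma antimono_at_right_le_limit:
  fixes g :: "real \<Rightarrow> real"
  assumes antimono: "\<And>d1 d2. 0 < d1 \<Longrightarrow> d1 \<le> d2 \<Longrightarrow> g d2 \<le> g d1"
    and lim: "(g \<longlongrightarrow> L) (at_right 0)"
    and d: "d > 0"
  shows "g d \<le> L"
proof (rule tendsto_lowerbound[OF lim])
  show "\<forall>\<^sub>F d' in at_right 0. g d \<le> g d'"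
    unfolding eventually_at_right_field using d antimono by (intro exI[of _ d]) auto
qed simp

lemma coercive_sublevel_bounded:
  fixes f :: "'a::real_normed_vector \<Rightarrow> real"
  assumes "coercive f"
  shows "bounded {u. f u \<le> M}"
proof -
  obtain b where b: "\<And>u. b \<le> norm u \<Longrightarrow> M + 1 \<le> f u"
    using assms unfolding coercive_def filterlim_at_top eventually_at_infinity by blast
  have "norm u \<le> b" if "f u \<le> M" for u
    using b[of u] that by linarith
  hence "{u. f u \<le> M} \<subseteq> cball 0 b" by auto
  thus ?thesis using bounded_cball bounded_subset by blast
qed

lemma coercive_bdd_below:
  fixes f :: "'a::{heine_borel,real_normed_vector} \<Rightarrow> real"
  assumes cont: "continuous_on UNIV f" and "coercive f"
  shows "bdd_below (range f)"
proof -
  obtain b where b: "\<And>u. b \<le> norm u \<Longrightarrow> 0 \<le> f u"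
    using assms(2) unfolding coercive_def filterlim_at_top eventually_at_infinity by blast
  have "compact (f ` cball 0 b)"
    by (rule compact_continuous_image[OF continuous_on_subset[OF cont subset_UNIV]]) simp
  hence "bdd_below (f ` cball 0 b)" by (intro bounded_imp_bdd_below compact_imp_bounded)
  then obtain a where a: "\<And>v. v \<in> f ` cball 0 b \<Longrightarrow> a \<le> v" by (erule bdd_below.E)
  have "min 0 a \<le> f u" for u
  proof (cases "b \<le> norm u")
    case True thus ?thesis using b[of u] by (simp add: min_le_iff_disj)
  next
    case False thus ?thesis using a[of "f u"] by (simp add: min_le_iff_disj)
  qed
  thus ?thesis by (rule bdd_belowI2)
qed

lemma trivial_joint_kernel_norm_bound:
  fixes H :: "real^'n^'q" and V0 :: "real^'n^'m"
  assumes ker: "{x. H *v x = 0} \<inter> {x. V0 *v x = 0} = {0}"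
  obtains B where "B > 0" "\<And>x. B * norm x \<le> norm (H *v x) + norm (V0 *v x)"
proof -
  define f where "f x = (H *v x, V0 *v x)" for x :: "real^'n"
  have lin: "linear f" unfolding f_def
    by (intro bounded_linear.linear bounded_linear_Pair matrix_vector_mul_bounded_linear)
  have "inj f"
    using ker by (auto simp: linear_injective_0[OF lin] f_def zero_prod_def)
  then obtain B where "B > 0" "\<And>x. B * norm x \<le> norm (f x)"
    using linear_inj_bounded_below_pos[OF lin] by blast
  with norm_Pair_le that show thesis unfolding f_def by (meson order_trans)
qed

lemma coercive_quadratic_penalty_sublevel_bounded:
  fixes Phi :: "real^'q \<Rightarrow> real" and H :: "real^'n^'q" and V0 :: "real^'n^'m"
  assumes bdd: "bdd_below (range Phi)" and coercive: "coercive Phi"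
    and ker: "{x. H *v x = 0} \<inter> {x. V0 *v x = 0} = {0}"
  shows "bounded {x. Phi (H *v x - y) + (norm (V0 *v x))\<^sup>2 \<le> M}"
proof -
  obtain m where m: "\<And>u. m \<le> Phi u" using bdd by (auto simp: bdd_below_def)
  obtain R where R: "\<And>u. Phi u \<le> M \<Longrightarrow> norm u \<le> R"
    using coercive_sublevel_bounded[OF coercive, of M] by (auto simp: bounded_iff)
  obtain B where B: "B > 0" "\<And>x. B * norm x \<le> norm (H *v x) + norm (V0 *v x)"
    using trivial_joint_kernel_norm_bound[OF ker] by blast
  have "norm x \<le> (R + norm y + sqrt (M - m)) / B"
    if x: "Phi (H *v x - y) + (norm (V0 *v x))\<^sup>2 \<le> M" for x
  proof -
    have "norm (H *v x - y) \<le> R"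
      using x zero_le_power2[of "norm (V0 *v x)"] by (intro R) linarith
    hence "norm (H *v x) \<le> R + norm y"
      using norm_triangle_ineq2[of "H *v x" y] by linarith
    moreover have "norm (V0 *v x) \<le> sqrt (M - m)"
      using x m[of "H *v x - y"] by (simp add: real_le_rsqrt)
    ultimately have "B * norm x \<le> R + norm y + sqrt (M - m)"
      using B(2)[of x] by linarith
    thus ?thesis using B(1) by (simp add: pos_le_divide_eq mult.commute)
  qed
  thus ?thesis by (intro boundedI) auto
qed

subsection \<open>Monotone approximation from below\<close>

locale monotone_approximation =
  fixes F :: "real \<Rightarrow> 'a::heine_borel \<Rightarrow> real" and F0 G :: "'a \<Rightarrow> real"
    and \<delta> :: "nat \<Rightarrow> real"
  assumes continuous: "d > 0 \<Longrightarrow> continuous_on UNIV (F d)"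
    and antimono: "0 < d1 \<Longrightarrow> d1 \<le> d2 \<Longrightarrow> F d2 x \<le> F d1 x"
    and le_limit: "d > 0 \<Longrightarrow> F d x \<le> F0 x"
    and tendsto_limit: "((\<lambda>d. F d x) \<longlongrightarrow> F0 x) (at_right 0)"
    and lower_le: "d > 0 \<Longrightarrow> G x \<le> F d x"
    and lower_bdd_below: "bdd_below (range G)"
    and lower_sublevel_bounded: "bounded {x. G x \<le> M}"
    and delta_pos: "\<delta> n > 0"
    and delta_decseq: "decseq \<delta>"
    and delta_tendsto: "\<delta> \<longlonglongrightarrow> 0"
begin

definition inf_at :: "nat \<Rightarrow> real" where
  "inf_at n = (INF x. F (\<delta> n) x)"

definition inf_limit :: real where
  "inf_limit = (INF x. F0 x)"

lemma bdd_below_F: "bdd_below (range (F (\<delta> n)))"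
proof -
  obtain m where "\<And>x. m \<le> G x" using lower_bdd_below by (auto simp: bdd_below_def)
  thus ?thesis using lower_le[OF delta_pos] by (meson bdd_belowI2 order_trans)
qed

lemma bdd_below_F0: "bdd_below (range F0)"
proof -
  obtain m where "\<And>x. m \<le> F (\<delta> 0) x" using bdd_below_F by (auto simp: bdd_below_def)
  thus ?thesis using le_limit[OF delta_pos] by (meson bdd_belowI2 order_trans)
qed

lemma inf_at_le: "inf_at n \<le> F (\<delta> n) x"
  unfolding inf_at_def by (rule cINF_lower[OF bdd_below_F]) simp

lemma inf_limit_le: "inf_limit \<le> F0 x"
  unfolding inf_limit_def by (rule cINF_lower[OF bdd_below_F0]) simp

lemma inf_at_le_inf_limit: "inf_at n \<le> inf_limit"
  unfolding inf_limit_def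
  by (rule cINF_greatest) (auto intro: order_trans[OF inf_at_le le_limit[OF delta_pos]])

lemma F_mono_index: "n \<le> k \<Longrightarrow> F (\<delta> n) x \<le> F (\<delta> k) x"
  using antimono[OF delta_pos] delta_decseq by (simp add: decseq_def)

lemma incseq_inf_at: "incseq inf_at"
  unfolding incseq_def inf_at_def
  by (intro allI impI cINF_greatest) (auto intro: order_trans[OF inf_at_le[unfolded inf_at_def] F_mono_index])

lemma tendsto_inf_at_SUP: "inf_at \<longlonglongrightarrow> (SUP n. inf_at n)"
  using inf_at_le_inf_limit
  by (intro LIMSEQ_incseq_SUP[OF _ incseq_inf_at]) (auto intro!: bdd_aboveI)

lemma SUP_inf_at_le_inf_limit: "(SUP n. inf_at n) \<le> inf_limit"
  using inf_at_le_inf_limit by (intro cSUP_least) auto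

lemma tendsto_F_limit: "(\<lambda>n. F (\<delta> n) x) \<longlonglongrightarrow> F0 x"
proof -
  have "filterlim \<delta> (at_right 0) sequentially"
    using delta_tendsto delta_pos
    by (auto simp: filterlim_at intro!: always_eventually dest: less_imp_neq[symmetric])
  thus ?thesis by (rule filterlim_compose[OF tendsto_limit])
qed

lemma near_minimizers_bounded:
  assumes near: "\<And>n. F (\<delta> n) (xs n) \<le> inf_at n + e n" and e: "e \<longlonglongrightarrow> 0"
  shows "bounded (range xs)"
proof -
  obtain E where E: "\<And>n. e n \<le> E"
    using convergent_imp_Bseq[OF convergentI[OF e]] by (metis BseqE abs_le_D1 real_norm_def)
  have "range xs \<subseteq> {x. G x \<le> inf_limit + E}"
    using lower_le[OF delta_pos] near inf_at_le_inf_limit E by (fastforce intro: order_trans add_mono)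
  thus ?thesis using lower_sublevel_bounded bounded_subset by blast
qed

lemma near_minimizers_cluster_point_le:
  assumes near: "\<And>n. F (\<delta> n) (xs n) \<le> inf_at n + e n" and e: "e \<longlonglongrightarrow> 0"
    and r: "strict_mono r" and conv: "(xs \<circ> r) \<longlonglongrightarrow> z"
  shows "F0 z \<le> (SUP n. inf_at n)"
proof -
  let ?L = "SUP n. inf_at n"
  have "F (\<delta> k) z \<le> ?L" for k
  proof (rule tendsto_le[of sequentially])
    show "(\<lambda>n. F (\<delta> k) ((xs \<circ> r) n)) \<longlonglongrightarrow> F (\<delta> k) z"
      using continuous[OF delta_pos] conv by (rule continuous_on_tendsto_compose) auto
    show "(\<lambda>n. ?L + e (r n)) \<longlonglongrightarrow> ?L"
      using tendsto_add[OF tendsto_const LIMSEQ_subseq_LIMSEQ[OF e r]] by (simp add: o_def)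
    show "\<forall>\<^sub>F n in sequentially. F (\<delta> k) ((xs \<circ> r) n) \<le> ?L + e (r n)"
    proof (rule eventually_sequentiallyI[of k])
      fix n assume "k \<le> n"
      hence "F (\<delta> k) (xs (r n)) \<le> F (\<delta> (r n)) (xs (r n))"
        using seq_suble[OF r, of n] by (intro F_mono_index) linarith
      also have "\<dots> \<le> inf_at (r n) + e (r n)" by (rule near)
      also have "\<dots> \<le> ?L + e (r n)"
        using incseq_le[OF incseq_inf_at tendsto_inf_at_SUP] by simp
      finally show "F (\<delta> k) ((xs \<circ> r) n) \<le> ?L + e (r n)" by simp
    qed
  qed simp
  thus ?thesis by (intro LIMSEQ_le_const2[OF tendsto_F_limit]) auto
qed

lemma SUP_inf_at_eq: "(SUP n. inf_at n) = inf_limit"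
proof -
  have "\<exists>x. F (\<delta> n) x < inf_at n + 1 / (real n + 1)" for n
  proof -
    have "(INF x. F (\<delta> n) x) < inf_at n + 1 / (real n + 1)" unfolding inf_at_def by simp
    thus ?thesis using cINF_less_iff[OF UNIV_not_empty bdd_below_F] by blast
  qed
  then obtain xs where near: "\<And>n. F (\<delta> n) (xs n) \<le> inf_at n + 1 / (real n + 1)"
    by (metis less_imp_le)
  have e: "(\<lambda>n. 1 / (real n + 1)) \<longlonglongrightarrow> 0"
    using LIMSEQ_inverse_real_of_nat by (simp add: inverse_eq_divide add.commute)
  obtain z r where "strict_mono r" "(xs \<circ> r) \<longlonglongrightarrow> z"
    using bounded_imp_convergent_subsequence[OF near_minimizers_bounded[OF near e]] by blast
  hence "F0 z \<le> (SUP n. inf_at n)" by (rule near_minimizers_cluster_point_le[OF near e])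
  thus ?thesis using SUP_inf_at_le_inf_limit inf_limit_le[of z] by linarith
qed

lemma tendsto_inf_at: "inf_at \<longlonglongrightarrow> inf_limit"
  using tendsto_inf_at_SUP by (simp add: SUP_inf_at_eq)

context
  fixes xh :: "nat \<Rightarrow> 'a"
  assumes minimizers: "\<And>n. is_minimizer (F (\<delta> n)) (xh n)"
begin

lemma minimizers_near: "F (\<delta> n) (xh n) \<le> inf_at n + 0"
  using minimizers unfolding inf_at_def is_minimizer_def by (auto intro: cINF_greatest)

lemma minimizers_bounded: "bounded (range xh)"
  using near_minimizers_bounded[OF minimizers_near tendsto_const] .

lemma minimizers_cluster_point:
  assumes "strict_mono r" "(xh \<circ> r) \<longlonglongrightarrow> z"
  shows "is_minimizer F0 z"
  using near_minimizers_cluster_point_le[OF minimizers_near tendsto_const assms] inf_limit_le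
  unfolding is_minimizer_def SUP_inf_at_eq by (blast intro: order_trans)

lemma minimizers_tendsto_unique_minimizer:
  assumes "\<And>z. is_minimizer F0 z \<Longrightarrow> z = xt"
  shows "xh \<longlonglongrightarrow> xt"
  using minimizers_bounded by (rule LIMSEQ_unique_cluster_point) (use assms minimizers_cluster_point in blast)

end

end

context
  fixes Phi :: "real^'q \<Rightarrow> real" and H :: "real^'n^'q" and y :: "real^'q"
    and V0 :: "real^'n^'m" and S :: nat and P :: "nat \<Rightarrow> nat"
    and V :: "nat \<Rightarrow> nat \<Rightarrow> 'n \<Rightarrow> real" and c :: "nat \<Rightarrow> nat \<Rightarrow> real"
    and psi :: "nat \<Rightarrow> real \<Rightarrow> real \<Rightarrow> real" and lam :: real
begin

lemma F_zero_eq_sum: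
  "F_zero Phi H y V0 S P V c lam x = Phi (H *v x - y)
     + (\<Sum>s=1..S. lam * chi_nz (block_norm P (block_res V c x) s)) + (norm (V0 *v x))\<^sup>2"
  unfolding F_zero_def ell0_def by (simp add: sum_distrib_left)

lemma continuous_on_F_delta:
  assumes "continuous_on UNIV Phi" and "\<forall>s\<in>{1..S}. continuous_on UNIV (psi s d)"
  shows "continuous_on UNIV (F_delta Phi H y V0 S P V c psi d)"
proof -
  have "continuous_on UNIV (\<lambda>x. block_norm P (block_res V c x) s)" for s
    unfolding block_norm_def block_res_def by (intro continuous_intros)
  hence "continuous_on UNIV (\<lambda>x. psi s d (block_norm P (block_res V c x) s))" if "s \<in> {1..S}" for s
    using continuous_on_compose2[OF assms(2)[rule_format, OF that]] by blast
  thus ?thesis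
    unfolding F_delta_def
    by (intro continuous_intros continuous_on_compose2[OF assms(1)]) auto
qed

lemma F_delta_antimono:
  assumes "\<forall>s\<in>{1..S}. \<forall>d1 d2. 0 < d1 \<and> d1 \<le> d2 \<longrightarrow> (\<forall>t. psi s d1 t \<ge> psi s d2 t)"
    and "0 < d1" "d1 \<le> d2"
  shows "F_delta Phi H y V0 S P V c psi d2 x \<le> F_delta Phi H y V0 S P V c psi d1 x"
proof -
  have "psi s d2 t \<le> psi s d1 t" if "s \<in> {1..S}" for s t
    using assms that by blast
  thus ?thesis unfolding F_delta_def by (intro add_mono order_refl sum_mono) blast
qed

lemma F_delta_le_F_zero:
  assumes "\<forall>s\<in>{1..S}. \<forall>d1 d2. 0 < d1 \<and> d1 \<le> d2 \<longrightarrow> (\<forall>t. psi s d1 t \<ge> psi s d2 t)"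
    and "\<forall>s\<in>{1..S}. \<forall>t. ((\<lambda>d. psi s d t) \<longlongrightarrow> lam * chi_nz t) (at_right 0)"
    and "d > 0"
  shows "F_delta Phi H y V0 S P V c psi d x \<le> F_zero Phi H y V0 S P V c lam x"
proof -
  have "psi s d t \<le> lam * chi_nz t" if s: "s \<in> {1..S}" for s t
  proof (rule antimono_at_right_le_limit[where g = "\<lambda>d. psi s d t"])
    show "psi s d2 t \<le> psi s d1 t" if "0 < d1" "d1 \<le> d2" for d1 d2
      using assms(1) s that by blast
    show "((\<lambda>d. psi s d t) \<longlongrightarrow> lam * chi_nz t) (at_right 0)"
      using assms(2) s by blast
  qed (rule assms(3))
  thus ?thesis unfolding F_delta_def F_zero_eq_sum by (intro add_mono order_refl sum_mono) blast
qed

lemma F_delta_tendsto_F_zero: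
  assumes "\<forall>s\<in>{1..S}. \<forall>t. ((\<lambda>d. psi s d t) \<longlongrightarrow> lam * chi_nz t) (at_right 0)"
  shows "((\<lambda>d. F_delta Phi H y V0 S P V c psi d x) \<longlongrightarrow> F_zero Phi H y V0 S P V c lam x) (at_right 0)"
  unfolding F_delta_def F_zero_eq_sum using assms
  by (intro tendsto_add tendsto_const tendsto_sum) simp_all

lemma F_delta_ge_penalty:
  assumes "\<forall>s\<in>{1..S}. \<forall>t. psi s d t \<ge> 0"
  shows "Phi (H *v x - y) + (norm (V0 *v x))\<^sup>2 \<le> F_delta Phi H y V0 S P V c psi d x"
proof -
  have "0 \<le> psi s d t" if "s \<in> {1..S}" for s t
    using assms that by blast
  thus ?thesis unfolding F_delta_def by (simp add: sum_nonneg del: atLeastAtMost_iff)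
qed

lemma monotone_approximation_F_delta:
  assumes "continuous_on UNIV Phi" and "coercive Phi"
    and "\<forall>d>0. \<forall>s\<in>{1..S}. continuous_on UNIV (psi s d)"
    and "\<forall>d>0. \<forall>s\<in>{1..S}. \<forall>t. psi s d t \<ge> 0"
    and "{x. H *v x = 0} \<inter> {x. V0 *v x = 0} = {0}"
    and "\<forall>s\<in>{1..S}. \<forall>d1 d2. 0 < d1 \<and> d1 \<le> d2 \<longrightarrow> (\<forall>t. psi s d1 t \<ge> psi s d2 t)"
    and "\<forall>s\<in>{1..S}. \<forall>t. ((\<lambda>d. psi s d t) \<longlongrightarrow> lam * chi_nz t) (at_right 0)"
    and "\<forall>n. \<delta> n > 0" and "decseq \<delta>" and "\<delta> \<longlonglongrightarrow> 0"
  shows "monotone_approximation (F_delta Phi H y V0 S P V c psi) (F_zero Phi H y V0 S P V c lam)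
    (\<lambda>x. Phi (H *v x - y) + (norm (V0 *v x))\<^sup>2) \<delta>"
proof
  let ?F = "F_delta Phi H y V0 S P V c psi" and ?Fz = "F_zero Phi H y V0 S P V c lam"
  show "continuous_on UNIV (?F d)" if "d > 0" for d
    using assms(1,3) that by (intro continuous_on_F_delta) auto
  show "?F d2 x \<le> ?F d1 x" if "0 < d1" "d1 \<le> d2" for d1 d2 x
    using assms(6) that by (rule F_delta_antimono)
  show "?F d x \<le> ?Fz x" if "d > 0" for d x
    using assms(6,7) that by (rule F_delta_le_F_zero)
  show "((\<lambda>d. ?F d x) \<longlongrightarrow> ?Fz x) (at_right 0)" for x
    using assms(7) by (rule F_delta_tendsto_F_zero)
  show "Phi (H *v x - y) + (norm (V0 *v x))\<^sup>2 \<le> ?F d x" if "d > 0" for d x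
    using assms(4) that by (intro F_delta_ge_penalty) auto
  obtain m where m: "\<And>u. m \<le> Phi u"
    using coercive_bdd_below[OF assms(1,2)] by (auto simp: bdd_below_def)
  show "bdd_below (range (\<lambda>x. Phi (H *v x - y) + (norm (V0 *v x))\<^sup>2))"
    using m by (intro bdd_belowI2[where m = m]) (metis add_increasing2 zero_le_power2)
  show "bounded {x. Phi (H *v x - y) + (norm (V0 *v x))\<^sup>2 \<le> M}" for M
    using coercive_bdd_below[OF assms(1,2)] assms(2,5)
    by (rule coercive_quadratic_penalty_sublevel_bounded)
qed (use assms in auto)

end

theorem proposition2:
  fixes Phi :: "real^'q \<Rightarrow> real" and H :: "real^'n^'q" and y :: "real^'q"
    and V0 :: "real^'n^'m" and S :: nat and P :: "nat \<Rightarrow> nat"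
    and V :: "nat \<Rightarrow> nat \<Rightarrow> 'n \<Rightarrow> real" and c :: "nat \<Rightarrow> nat \<Rightarrow> real"
    and psi :: "nat \<Rightarrow> real \<Rightarrow> real \<Rightarrow> real" and lam :: real
    and \<delta> :: "nat \<Rightarrow> real"
  assumes S_pos: "S \<ge> 1"
    and P_pos: "\<forall>s\<in>{1..S}. P s \<ge> 1"
    and H_nz: "H \<noteq> 0"
    and Phi_cont: "continuous_on UNIV Phi"
    and Phi_coercive: "coercive Phi"
    and psi_cont: "\<forall>d>0. \<forall>s\<in>{1..S}. continuous_on UNIV (psi s d)"
    and psi_nonneg: "\<forall>d>0. \<forall>s\<in>{1..S}. \<forall>t. psi s d t \<ge> 0"
    and ker: "{x. H *v x = 0} \<inter> {x. V0 *v x = 0} = {0}"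
    and psi_mono: "\<forall>s\<in>{1..S}. \<forall>d1 d2. 0 < d1 \<and> d1 \<le> d2 \<longrightarrow> (\<forall>t. psi s d1 t \<ge> psi s d2 t)"
    and lam_pos: "lam > 0"
    and psi_lim: "\<forall>s\<in>{1..S}. \<forall>t. ((\<lambda>d. psi s d t) \<longlongrightarrow> lam * chi_nz t) (at_right 0)"
    and delta_pos: "\<forall>n. \<delta> n > 0"
    and delta_dec: "decseq \<delta>"
    and delta_lim: "\<delta> \<longlonglongrightarrow> 0"
  shows
    "((\<lambda>n. INF x. F_delta Phi H y V0 S P V c psi (\<delta> n) x)
        \<longlonglongrightarrow> (INF x. F_zero Phi H y V0 S P V c lam x))
     \<and> (\<forall>xh :: nat \<Rightarrow> real^'n.
          (\<forall>n. is_minimizer (F_delta Phi H y V0 S P V c psi (\<delta> n)) (xh n)) \<longrightarrow>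
            bounded (range xh)
            \<and> (\<forall>z. (\<exists>r. strict_mono r \<and> (xh \<circ> r) \<longlonglongrightarrow> z)
                    \<longrightarrow> is_minimizer (F_zero Phi H y V0 S P V c lam) z)
            \<and> (\<forall>xt. is_minimizer (F_zero Phi H y V0 S P V c lam) xt
                    \<and> (\<forall>z. is_minimizer (F_zero Phi H y V0 S P V c lam) z \<longrightarrow> z = xt)
                    \<longrightarrow> xh \<longlonglongrightarrow> xt))"
proof -
  interpret monotone_approximation "F_delta Phi H y V0 S P V c psi" "F_zero Phi H y V0 S P V c lam"
    "\<lambda>x. Phi (H *v x - y) + (norm (V0 *v x))\<^sup>2" \<delta>
    using assms by (intro monotone_approximation_F_delta) simp_all
  let ?F = "F_delta Phi H y V0 S P V c psi" and ?Fz = "F_zero Phi H y V0 S P V c lam"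
  show ?thesis
  proof (intro conjI allI impI)
    show "(\<lambda>n. INF x. ?F (\<delta> n) x) \<longlonglongrightarrow> (INF x. ?Fz x)"
      using tendsto_inf_at unfolding inf_at_def inf_limit_def .
  next
    fix xh assume "\<forall>n. is_minimizer (?F (\<delta> n)) (xh n)"
    thus "bounded (range xh)" by (intro minimizers_bounded) blast
  next
    fix xh z assume "\<forall>n. is_minimizer (?F (\<delta> n)) (xh n)"
      and "\<exists>r. strict_mono r \<and> (xh \<circ> r) \<longlonglongrightarrow> z"
    thus "is_minimizer ?Fz z" using minimizers_cluster_point by blast
  next
    fix xh xt assume "\<forall>n. is_minimizer (?F (\<delta> n)) (xh n)"
      and "is_minimizer ?Fz xt \<and> (\<forall>z. is_minimizer ?Fz z \<longrightarrow> z = xt)"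
    thus "xh \<longlonglongrightarrow> xt" using minimizers_tendsto_unique_minimizer by blast
  qed
qed

end
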